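(* Let $\mathsf{T}$ be an $R$-linear triangulated category, $X$ and $Y$ objects of $\mathsf{T}$, $d$ a positive even integer and $z\in R^d$. Assume $\lambda^n(X,Y)<\infty$ for all $n\in\mathbb{Z}$. If for all $n\gg0$ there are short exact sequences $$0\to\operatorname{Hom}_{\mathsf{T}}(X,\Sigma^nY)\to\operatorname{Hom}_{\mathsf{T}}(X,\Sigma^{n+d}Y)\to\operatorname{Hom}_{\mathsf{T}}(X,\Sigma^n(Y/\!\!/z))\to0$$ (of $R^0$-modules), then $h(X,Y/\!\!/z)(n)=h(X,Y)(n+d)-h(X,Y)(n)$ for all $n\gg0$, and for every $s\ge1$ one has $\Delta^{s-1}h(X,Y/\!\!/z)(n)=\Delta^sh(X,Y)(n)$ for all $n\gg0$.
   Context: $R=\bigoplus_{n\ge 0}R^n$ is a graded-commutative Noetherian ring. $\mathsf{T}$ is a triangulated category with suspension $\Sigma$ that is $R$-linear: a graded ring homomorphism $\phi$ from $R$ to the graded center of $\mathsf{T}$ (degree-$n$ elements are natural transformations $\eta:\mathrm{id}\to\Sigma^n$ with $\eta\Sigma=(-1)^n\Sigma\eta$), giving $\phi_Y:R\to\bigoplus_n\operatorname{Hom}_{\mathsf{T}}(Y,\Sigma^nY)$; each $\operatorname{Hom}_{\mathsf{T}}(X,\Sigma^nY)$ is an $R^0$-module. $\lambda^n(X,Y)=\ell_{R^0}\operatorname{Hom}_{\mathsf{T}}(X,\Sigma^nY)$. $Y/\!\!/z$ is defined by a distinguished triangle $Y\xrightarrow{\phi_Y(z)}\Sigma^dY\to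 Y/\!\!/z\to\Sigma Y$. The (index $d$) generalized Herbrand difference is $h(X,Y)(n)=\sum_{i=0}^{d-1}(-1)^{n+i}\lambda^{n+i}(X,Y)$. The difference operator of index $d$ is $\Delta^1f(n)=f(n+d)-f(n)$, $\Delta^0f=f$, $\Delta^sf=\Delta^1(\Delta^{s-1}f)$. *)

theory Defs
  imports "HOL-Algebra.Module" "HOL-Library.Extended_Nat"
begin

definition module_hom ::
  "('r, 'c) ring_scheme \<Rightarrow> ('r, 'a) module \<Rightarrow> ('r, 'b) module \<Rightarrow> ('a \<Rightarrow> 'b) \<Rightarrow> bool" where
  "module_hom R M N f \<longleftrightarrow>
     f \<in> carrier M \<rightarrow> carrier N \<and>
     (\<forall>x\<in>carrier M. \<forall>y\<in>carrier M. f (x \<oplus>\<^bsub>M\<^esub> y) = f x \<oplus>\<^bsub>N\<^esub> f y) \<and>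
     (\<forall>a\<in>carrier R. \<forall>x\<in>carrier M. f (a \<odot>\<^bsub>M\<^esub> x) = a \<odot>\<^bsub>N\<^esub> f x)"

definition short_exact ::
  "('r, 'c) ring_scheme \<Rightarrow> ('r, 'a) module \<Rightarrow> ('r, 'b) module \<Rightarrow> ('r, 'd) module
    \<Rightarrow> ('a \<Rightarrow> 'b) \<Rightarrow> ('b \<Rightarrow> 'd) \<Rightarrow> bool" where
  "short_exact R A B C f g \<longleftrightarrow>
     module_hom R A B f \<and> module_hom R B C g \<and>
     inj_on f (carrier A) \<and>
     g ` carrier B = carrier C \<and>
     f ` carrier A = {y \<in> carrier B. g y = \<zero>\<^bsub>C\<^esub>}"

definition module_length :: "('r, 'c) ring_scheme \<Rightarrow> ('r, 'a) module \<Rightarrow> enat" where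
  "module_length R M = Sup {enat n | n. \<exists>N :: nat \<Rightarrow> 'a set.
       (\<forall>i\<le>n. submodule (N i) R M) \<and> (\<forall>i<n. N i \<subset> N (Suc i))}"

text \<open>lambda^n as an integer (meaningful where the length is finite).\<close>
definition lam :: "('r, 'c) ring_scheme \<Rightarrow> (int \<Rightarrow> ('r, 'a) module) \<Rightarrow> int \<Rightarrow> int" where
  "lam R H n = int (the_enat (module_length R (H n)))"

text \<open>Generalized Herbrand difference of index d of the family H n = Hom(X, Sigma^n Y).\<close>
definition herbrand :: "('r, 'c) ring_scheme \<Rightarrow> nat \<Rightarrow> (int \<Rightarrow> ('r, 'a) module) \<Rightarrow> int \<Rightarrow> int" where
  "herbrand R d H n = (\<Sum>i<d. (if even (n + int i) then 1 else -1) * lam R H (n + int i))"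

definition diff_op :: "nat \<Rightarrow> (int \<Rightarrow> int) \<Rightarrow> int \<Rightarrow> int" where
  "diff_op d f n = f (n + int d) - f n"

definition Delta :: "nat \<Rightarrow> nat \<Rightarrow> (int \<Rightarrow> int) \<Rightarrow> int \<Rightarrow> int" where
  "Delta d s f = (diff_op d ^^ s) f"

end

theory Submission
  imports Defs "HOL-Algebra.AbelCoset"
begin

text \<open>Length is additive on short exact sequences 0 -> A -f-> B -g-> C -> 0: a chain in A
  pushed forward along f followed by a chain in C pulled back along g is a chain in B, and
  conversely every strict step of a chain in B stays strict after pulling back to A or after
  pushing forward to C (if both became equalities, the step would be one by the modular law).
  Hence lambda^n(X, Y//z) = lambda^(n+d)(X, Y) - lambda^n(X, Y) for n >> 0. As d is even, the
  signs in the Herbrand difference are d-periodic, so h(X, Y//z) agrees eventually with the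
  first difference of h(X, Y), and applying the (s-1)-st difference gives the second claim.\<close>

lemma module_hom_abelian_group_hom:
  assumes "Module.module R M" "Module.module R N" "module_hom R M N f"
  shows "abelian_group_hom M N f"
proof -
  interpret M: Module.module R M by fact
  interpret N: Module.module R N by fact
  show ?thesis
    using assms(3) unfolding module_hom_def
    by (intro abelian_group_homI M.abelian_group_axioms N.abelian_group_axioms group_hom.intro
        group_hom_axioms.intro homI M.a_group N.a_group) auto
qed

lemma module_hom_smult:
  "module_hom R M N f \<Longrightarrow> a \<in> carrier R \<Longrightarrow> x \<in> carrier M \<Longrightarrow> f (a \<odot>\<^bsub>M\<^esub> x) = a \<odot>\<^bsub>N\<^esub> f x"
  unfolding module_hom_def by blast

lemma submodule_zero_closed: "submodule S R M \<Longrightarrow> \<zero>\<^bsub>M\<^esub> \<in> S"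
  using subgroup.one_closed[OF submodule.axioms(1)] by fastforce

lemma submodule_image:
  assumes "Module.module R A" "Module.module R B" "module_hom R A B f" "submodule S R A"
  shows "submodule (f ` S) R B"
proof -
  interpret A: Module.module R A by fact
  interpret B: Module.module R B by fact
  interpret f: abelian_group_hom A B f
    using module_hom_abelian_group_hom[OF assms(1-3)] .
  have S: "S \<subseteq> carrier A" using A.submoduleE(1)[OF assms(4)] .
  show ?thesis
  proof (rule B.submoduleI)
    show "f ` S \<subseteq> carrier B" "\<zero>\<^bsub>B\<^esub> \<in> f ` S"
      using S submodule_zero_closed[OF assms(4)] by (auto intro!: image_eqI[of _ f "\<zero>\<^bsub>A\<^esub>"])
  next
    fix x y assume "x \<in> f ` S" "y \<in> f ` S"
    then obtain u v where uv: "u \<in> S" "v \<in> S" "x = f u" "y = f v" by blast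
    with S have "u \<in> carrier A" "v \<in> carrier A" by auto
    with uv show "\<ominus>\<^bsub>B\<^esub> x \<in> f ` S" "x \<oplus>\<^bsub>B\<^esub> y \<in> f ` S"
      using A.submoduleE(3,5)[OF assms(4)]
      by (auto intro: image_eqI[of _ f "\<ominus>\<^bsub>A\<^esub> u"] image_eqI[of _ f "u \<oplus>\<^bsub>A\<^esub> v"])
  next
    fix a x assume "a \<in> carrier R" "x \<in> f ` S"
    with S show "a \<odot>\<^bsub>B\<^esub> x \<in> f ` S"
      using A.submoduleE(4)[OF assms(4)] module_hom_smult[OF assms(3)]
      by (auto intro!: image_eqI[of _ f "a \<odot>\<^bsub>A\<^esub> _"])
  qed
qed

lemma submodule_vimage:
  assumes "Module.module R A" "Module.module R B" "module_hom R A B f" "submodule T R B"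
  shows "submodule {x \<in> carrier A. f x \<in> T} R A"
proof -
  interpret A: Module.module R A by fact
  interpret B: Module.module R B by fact
  interpret f: abelian_group_hom A B f
    using module_hom_abelian_group_hom[OF assms(1-3)] .
  show ?thesis
    using submodule_zero_closed[OF assms(4)] B.submoduleE(3-5)[OF assms(4)]
      module_hom_smult[OF assms(3)]
    by (intro A.submoduleI) auto
qed

definition submodule_chain ::
  "('r, 'c) ring_scheme \<Rightarrow> ('r, 'a) module \<Rightarrow> nat \<Rightarrow> (nat \<Rightarrow> 'a set) \<Rightarrow> bool" where
  "submodule_chain R M n N \<longleftrightarrow> (\<forall>i\<le>n. submodule (N i) R M) \<and> (\<forall>i<n. N i \<subset> N (Suc i))"

lemma submodule_chain_le_module_length:
  "submodule_chain R M n N \<Longrightarrow> enat n \<le> module_length R M"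
  unfolding module_length_def submodule_chain_def by (rule Sup_upper) blast

lemma module_length_leI:
  "(\<And>n N. submodule_chain R M n N \<Longrightarrow> enat n \<le> k) \<Longrightarrow> module_length R M \<le> k"
  unfolding module_length_def submodule_chain_def by (rule Sup_least) blast

lemma submodule_chain_trivial: "Module.module R M \<Longrightarrow> submodule_chain R M 0 (\<lambda>_. carrier M)"
  unfolding submodule_chain_def using module.carrier_is_submodule by auto

lemma module_length_attained:
  assumes "Module.module R M" "module_length R M = enat L"
  shows "\<exists>N. submodule_chain R M L N"
proof -
  define S where "S = {enat n | n. \<exists>N. submodule_chain R M n N}"
  have length_S: "module_length R M = Sup S"
    unfolding S_def module_length_def submodule_chain_def ..
  have "S \<noteq> {}" using submodule_chain_trivial[OF assms(1)] unfolding S_def by blast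
  moreover have "finite S"
    using assms(2) \<open>S \<noteq> {}\<close> unfolding length_S Sup_enat_def by (auto split: if_splits)
  ultimately have "Sup S \<in> S" unfolding Sup_enat_def by (simp add: Max_in)
  then show ?thesis using assms(2) unfolding length_S S_def by auto
qed

lemma submodule_chain_of_mono:
  assumes "\<forall>i\<le>n. submodule (N i) R M" "\<forall>i<n. N i \<subseteq> N (Suc i)"
  defines "k \<equiv> card {i. i < n \<and> N i \<noteq> N (Suc i)}"
  shows "\<exists>P. submodule_chain R M k P \<and> P k = N n"
  using assms(1,2) unfolding k_def
proof (induction n)
  case 0
  then show ?case unfolding submodule_chain_def by (intro exI[of _ N]) auto
next
  case (Suc n)
  define k where "k = card {i. i < n \<and> N i \<noteq> N (Suc i)}"
  obtain P where P: "submodule_chain R M k P" "P k = N n"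
    using Suc unfolding k_def by auto
  show ?case
  proof (cases "N n = N (Suc n)")
    case True
    then have "{i. i < Suc n \<and> N i \<noteq> N (Suc i)} = {i. i < n \<and> N i \<noteq> N (Suc i)}"
      using less_Suc_eq by auto
    then show ?thesis using P True unfolding k_def by auto
  next
    case False
    then have "{i. i < Suc n \<and> N i \<noteq> N (Suc i)} = insert n {i. i < n \<and> N i \<noteq> N (Suc i)}"
      using less_Suc_eq by auto
    then have card: "card {i. i < Suc n \<and> N i \<noteq> N (Suc i)} = Suc k"
      unfolding k_def by simp
    have "submodule_chain R M (Suc k) (P(Suc k := N (Suc n)))"
      using P False Suc.prems unfolding submodule_chain_def by (auto simp: less_Suc_eq le_Suc_eq)
    then show ?thesis unfolding card by auto
  qed
qed

lemma card_strict_steps_le_module_length: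
  assumes "\<forall>i\<le>n. submodule (N i) R M" "\<forall>i<n. N i \<subseteq> N (Suc i)"
  shows "enat (card {i. i < n \<and> N i \<noteq> N (Suc i)}) \<le> module_length R M"
  using submodule_chain_of_mono[OF assms] submodule_chain_le_module_length by blast

lemma short_exact_chain_concat:
  assumes "Module.module R A" "Module.module R B" "Module.module R C"
    and ses: "short_exact R A B C f g"
    and NA: "submodule_chain R A a NA" and NC: "submodule_chain R C c NC"
  shows "submodule_chain R B (a + c)
           (\<lambda>i. if i \<le> a then f ` NA i else {y \<in> carrier B. g y \<in> NC (i - a)})"
    (is "submodule_chain R B (a + c) ?N")
proof -
  interpret A: Module.module R A by fact
  interpret C: Module.module R C by fact
  have f: "module_hom R A B f" and g: "module_hom R B C g" and inj: "inj_on f (carrier A)"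
    and surj: "g ` carrier B = carrier C" and exact: "f ` carrier A = {y \<in> carrier B. g y = \<zero>\<^bsub>C\<^esub>}"
    using ses unfolding short_exact_def by auto
  have subA: "\<And>i. i \<le> a \<Longrightarrow> submodule (NA i) R A"
    and strictA: "\<And>i. i < a \<Longrightarrow> NA i \<subset> NA (Suc i)"
    and subC: "\<And>i. i \<le> c \<Longrightarrow> submodule (NC i) R C"
    and strictC: "\<And>i. i < c \<Longrightarrow> NC i \<subset> NC (Suc i)"
    using NA NC unfolding submodule_chain_def by auto
  have vimage_strict: "{y \<in> carrier B. g y \<in> S} \<subset> {y \<in> carrier B. g y \<in> T}"
    if "S \<subset> T" "T \<subseteq> carrier C" for S T
  proof -
    obtain z where "z \<in> T" "z \<notin> S" using \<open>S \<subset> T\<close> by auto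
    moreover from this obtain y where "y \<in> carrier B" "g y = z"
      using surj \<open>T \<subseteq> carrier C\<close> by (metis imageE subsetD)
    ultimately show ?thesis using \<open>S \<subset> T\<close> by auto
  qed
  have step: "?N i \<subset> ?N (Suc i)" if "i < a + c" for i
  proof (cases "i < a")
    case True
    have "inj_on f (NA (Suc i))"
      using inj A.submoduleE(1)[OF subA] True by (meson inj_on_subset Suc_leI)
    then show ?thesis using image_strict_mono[OF _ strictA[OF True]] True by simp
  next
    case False
    have "NC (Suc i - a - 1) \<subset> NC (Suc i - a)" "NC (Suc i - a) \<subseteq> carrier C"
      using strictC[of "i - a"] C.submoduleE(1)[OF subC, of "Suc i - a"] that False
      by (auto simp: Suc_diff_le)
    then have strict: "{y \<in> carrier B. g y \<in> NC (Suc i - a - 1)} \<subset> ?N (Suc i)"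
      using vimage_strict False by auto
    show ?thesis
    proof (cases "i = a")
      case True
      have "?N i \<subseteq> {y \<in> carrier B. g y = \<zero>\<^bsub>C\<^esub>}"
        using True A.submoduleE(1)[OF subA] exact by auto
      also have "\<dots> \<subseteq> {y \<in> carrier B. g y \<in> NC (Suc i - a - 1)}"
        using True submodule_zero_closed[OF subC[of 0]] by auto
      finally show ?thesis using strict by blast
    next
      case False
      then show ?thesis using strict \<open>\<not> i < a\<close> by (auto simp: Suc_diff_le)
    qed
  qed
  moreover have "submodule (?N i) R B" if "i \<le> a + c" for i
    using submodule_image[OF assms(1,2) f subA] submodule_vimage[OF assms(2,3) g subC] that by auto
  ultimately show ?thesis unfolding submodule_chain_def by auto
qed

lemma short_exact_submodule_eqI:
  assumes "Module.module R A" "Module.module R B" "Module.module R C"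
    and ses: "short_exact R A B C f g"
    and B1: "submodule B1 R B" and B2: "submodule B2 R B" and "B1 \<subseteq> B2"
    and same_vimage: "{x \<in> carrier A. f x \<in> B1} = {x \<in> carrier A. f x \<in> B2}"
    and same_image: "g ` B1 = g ` B2"
  shows "B1 = B2"
proof -
  interpret B: Module.module R B by fact
  interpret g: abelian_group_hom B C g
    using module_hom_abelian_group_hom[OF assms(2,3)] ses unfolding short_exact_def by blast
  have exact: "f ` carrier A = {y \<in> carrier B. g y = \<zero>\<^bsub>C\<^esub>}"
    using ses unfolding short_exact_def by blast
  have carrier: "B1 \<subseteq> carrier B" "B2 \<subseteq> carrier B"
    using B.submoduleE(1) B1 B2 by auto
  have "y \<in> B1" if "y \<in> B2" for y
  proof -
    obtain y' where y': "y' \<in> B1" "g y = g y'" using same_image \<open>y \<in> B2\<close> by (metis imageE imageI)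
    have in_B: "y \<in> carrier B" "y' \<in> carrier B" using carrier \<open>y \<in> B2\<close> y' by auto
    define w where "w = y \<ominus>\<^bsub>B\<^esub> y'"
    have "w \<in> B2"
      unfolding w_def B.minus_eq using B.submoduleE(3,5)[OF B2] \<open>y \<in> B2\<close> y' \<open>B1 \<subseteq> B2\<close> by auto
    moreover have "g w = \<zero>\<^bsub>C\<^esub>"
      unfolding w_def B.minus_eq using in_B y' by (simp add: g.H.r_neg)
    ultimately obtain x where "x \<in> carrier A" "w = f x" "f x \<in> B2"
      using exact carrier by (metis (mono_tags, lifting) imageE mem_Collect_eq subsetD)
    then have "w \<in> B1" using same_vimage by blast
    moreover have "y = w \<oplus>\<^bsub>B\<^esub> y'"
      unfolding w_def using in_B by (simp add: B.minus_eq B.a_assoc B.l_neg)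
    ultimately show "y \<in> B1" using B.submoduleE(5)[OF B1] y' by auto
  qed
  then show ?thesis using \<open>B1 \<subseteq> B2\<close> by auto
qed

lemma short_exact_chain_le:
  assumes "Module.module R A" "Module.module R B" "Module.module R C"
    and ses: "short_exact R A B C f g" and N: "submodule_chain R B n N"
  shows "enat n \<le> module_length R A + module_length R C"
proof -
  have f: "module_hom R A B f" and g: "module_hom R B C g"
    using ses unfolding short_exact_def by auto
  have sub: "\<And>i. i \<le> n \<Longrightarrow> submodule (N i) R B" and strict: "\<And>i. i < n \<Longrightarrow> N i \<subset> N (Suc i)"
    using N unfolding submodule_chain_def by auto
  define NA where "NA i = {x \<in> carrier A. f x \<in> N i}" for i
  define NC where "NC i = g ` N i" for i
  define SA where "SA = {i. i < n \<and> NA i \<noteq> NA (Suc i)}"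
  define SC where "SC = {i. i < n \<and> NC i \<noteq> NC (Suc i)}"
  have "enat (card SA) \<le> module_length R A"
    unfolding SA_def NA_def using submodule_vimage[OF assms(1,2) f sub] strict
    by (intro card_strict_steps_le_module_length) auto
  moreover have "enat (card SC) \<le> module_length R C"
    unfolding SC_def NC_def using submodule_image[OF assms(2,3) g sub] strict
    by (intro card_strict_steps_le_module_length) (auto simp: image_mono less_imp_le)
  moreover have "{..<n} \<subseteq> SA \<union> SC"
  proof
    fix i assume "i \<in> {..<n}"
    show "i \<in> SA \<union> SC"
    proof (rule ccontr)
      assume "i \<notin> SA \<union> SC"
      then have "NA i = NA (Suc i)" "NC i = NC (Suc i)"
        using \<open>i \<in> {..<n}\<close> unfolding SA_def SC_def by auto
      then have "N i = N (Suc i)"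
        using short_exact_submodule_eqI[OF assms(1-4) sub[of i] sub[of "Suc i"]] strict[of i]
          \<open>i \<in> {..<n}\<close>
        unfolding NA_def NC_def by auto
      then show False using strict \<open>i \<in> {..<n}\<close> by auto
    qed
  qed
  then have "n \<le> card SA + card SC"
    using card_mono[of "SA \<union> SC" "{..<n}"] card_Un_le[of SA SC]
    unfolding SA_def SC_def by auto
  ultimately show ?thesis
    using add_mono order_trans by (metis of_nat_add of_nat_eq_enat of_nat_le_iff)
qed

lemma short_exact_module_length:
  assumes "Module.module R A" "Module.module R B" "Module.module R C"
    and "short_exact R A B C f g"
  shows "module_length R B = module_length R A + module_length R C"
proof (rule antisym)
  show "module_length R B \<le> module_length R A + module_length R C"
    using short_exact_chain_le[OF assms] by (rule module_length_leI)
next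
  have concat: "enat (a + c) \<le> module_length R B"
    if "submodule_chain R A a NA" "submodule_chain R C c NC" for a c NA NC
    using short_exact_chain_concat[OF assms that] by (rule submodule_chain_le_module_length)
  have "module_length R A \<le> module_length R B"
    using concat[OF _ submodule_chain_trivial[OF assms(3)]] by (auto intro: module_length_leI)
  moreover have "module_length R C \<le> module_length R B"
    using concat[OF submodule_chain_trivial[OF assms(1)]] by (auto intro: module_length_leI)
  moreover have "enat a + enat c \<le> module_length R B"
    if "module_length R A = enat a" "module_length R C = enat c" for a c
    using concat module_length_attained[OF assms(1) that(1)]
      module_length_attained[OF assms(3) that(2)] by fastforce
  ultimately show "module_length R A + module_length R C \<le> module_length R B"
    by (cases "module_length R A"; cases "module_length R C") auto
qed

lemma herbrand_eventually_diff:
  assumes "even d"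
    and lam: "\<forall>m\<ge>n0. lam R H' m = lam R H (m + int d) - lam R H m" and "n \<ge> n0"
  shows "herbrand R d H' n = herbrand R d H (n + int d) - herbrand R d H n"
proof -
  define sgn :: "int \<Rightarrow> int" where "sgn m = (if even m then 1 else -1)" for m
  have sgn_shift: "sgn (n + int d + int i) = sgn (n + int i)" for i
    using \<open>even d\<close> unfolding sgn_def by auto
  have "herbrand R d H' n =
      (\<Sum>i<d. sgn (n + int i) * (lam R H (n + int i + int d) - lam R H (n + int i)))"
    unfolding herbrand_def sgn_def using lam \<open>n \<ge> n0\<close> by (intro sum.cong) auto
  also have "\<dots> = (\<Sum>i<d. sgn (n + int d + int i) * lam R H (n + int d + int i))
                - (\<Sum>i<d. sgn (n + int i) * lam R H (n + int i))"
    unfolding sum_subtractf[symmetric] sgn_shift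
    by (intro sum.cong) (auto simp: right_diff_distrib add_ac)
  finally show ?thesis unfolding herbrand_def sgn_def .
qed

lemma Delta_eventually_cong:
  assumes "\<forall>m\<ge>n0. f m = g m" "n \<ge> n0"
  shows "Delta d k f n = Delta d k g n"
  using assms(2)
proof (induction k arbitrary: n)
  case 0
  then show ?case using assms(1) by (simp add: Delta_def)
next
  case (Suc k)
  then show ?case by (simp add: Delta_def diff_op_def)
qed

lemma Delta_Suc_right: "Delta d (Suc k) f = Delta d k (diff_op d f)"
  unfolding Delta_def by (simp add: funpow_Suc_right del: funpow.simps)

theorem lemma3p4:
  fixes R0 :: "'r ring"
    and HY :: "int \<Rightarrow> ('r, 'a) module"
    and HYz :: "int \<Rightarrow> ('r, 'b) module"
    and d :: nat
  assumes "cring R0"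
    and "\<And>n. Module.module R0 (HY n)"
    and "\<And>n. Module.module R0 (HYz n)"
    and "d > 0" and "even d"
    and "\<And>n. module_length R0 (HY n) < \<infinity>"
    and "\<exists>n0. \<forall>n\<ge>n0. \<exists>f g. short_exact R0 (HY n) (HY (n + int d)) (HYz n) f g"
  shows "(\<exists>n0. \<forall>n\<ge>n0. herbrand R0 d HYz n = herbrand R0 d HY (n + int d) - herbrand R0 d HY n)
       \<and> (\<forall>s\<ge>1. \<exists>n0. \<forall>n\<ge>n0. Delta d (s - 1) (herbrand R0 d HYz) n = Delta d s (herbrand R0 d HY) n)"
proof -
  obtain n0 where ses: "\<forall>n\<ge>n0. \<exists>f g. short_exact R0 (HY n) (HY (n + int d)) (HYz n) f g"
    using assms(7) by blast
  have lam: "\<forall>n\<ge>n0. lam R0 HYz n = lam R0 HY (n + int d) - lam R0 HY n"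
  proof (intro allI impI)
    fix n assume "n \<ge> n0"
    then obtain f g where "short_exact R0 (HY n) (HY (n + int d)) (HYz n) f g" using ses by blast
    then have "module_length R0 (HY (n + int d))
        = module_length R0 (HY n) + module_length R0 (HYz n)"
      by (rule short_exact_module_length[OF assms(2,2,3)])
    moreover obtain a b
      where "module_length R0 (HY n) = enat a" "module_length R0 (HY (n + int d)) = enat b"
      using assms(6) by (meson less_infinityE)
    ultimately show "lam R0 HYz n = lam R0 HY (n + int d) - lam R0 HY n"
      unfolding lam_def by (cases "module_length R0 (HYz n)") auto
  qed
  have herbrand: "\<forall>n\<ge>n0. herbrand R0 d HYz n = diff_op d (herbrand R0 d HY) n"
    using herbrand_eventually_diff[OF assms(5) lam] unfolding diff_op_def by blast
  show ?thesis
  proof (intro conjI allI impI)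
    show "\<exists>n0. \<forall>n\<ge>n0. herbrand R0 d HYz n = herbrand R0 d HY (n + int d) - herbrand R0 d HY n"
      using herbrand unfolding diff_op_def by blast
  next
    fix s :: nat assume "s \<ge> 1"
    then have "Delta d (s - 1) (herbrand R0 d HYz) n = Delta d s (herbrand R0 d HY) n"
      if "n \<ge> n0" for n
      using Delta_eventually_cong[OF herbrand that] Delta_Suc_right[of d "s - 1"] by simp
    then show "\<exists>n0. \<forall>n\<ge>n0. Delta d (s - 1) (herbrand R0 d HYz) n = Delta d s (herbrand R0 d HY) n"
      by blast
  qed
qed

end
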